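(* On any labelled transition system, the relations $\leftrightarrow_b$, $\leftrightarrow_b^{ds}$ and $\leftrightarrow_b^{\Delta}$ are equivalence relations.
   Context: Fix a set $\mathrm{Act}$ of actions containing a special action $\tau$. An LTS is $(S,\to)$ with $\to\subseteq S\times\mathrm{Act}\times S$. A path from $s$ is an alternating sequence $s_0,a_1,s_1,a_2,\dots$ (ending with a state if finite) with $s_0=s$ and $s_{k-1}\xrightarrow{a_k}s_k$; it is maximal if infinite or if its last state has no outgoing transitions. A colouring is a function $\mathcal{C}$ from $S$ into an arbitrary set of colours. For a path $\pi$, $\mathcal{C}(\pi)$ is obtained from $\mathcal{C}(s_0),a_1,\mathcal{C}(s_1),a_2,\dots$ by contracting every finite maximal consecutive subsequence $C,\tau,C,\tau,\dots,\tau,C$ and every infinite one $C,\tau,C,\tau,\dots$ to $C$. For $\pi$ from $s$, $\mathcal{C}(\pi)$ is a $\mathcal{C}$-coloured trace of $s$; complete if $\pi$ is maximal; divergent if $\pi$ is infinite and $\mathcal{C}(\pi)$ finite. $\mathcal{C}$ is consistent if any two states of equal colour have the same $\mathcal{C}$-coloured traces; fully consistent if any two states of equal colour have the same complete $\mathcal{C}$-coloured traces; a consistent $\mathcal{C}$ preserves divergence if any two states of equal colour have the same divergent $\mathcal{C}$-coloured traces. $s\leftrightarrow_b t$ iff some consistent colouring $\mathcal{C}$ has $\mathcal{C}(s)=\mathcal{C}(t)$; $s\leftrightarrow_b^{ds}t$ iff some fully consistent colouring $\mathcal{C}$ has $\mathcal{C}(s)=\mathcal{C}(t)$; $s\leftrightarrow_b^{\Delta}t$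 iff some consistent, divergence preserving colouring $\mathcal{C}$ has $\mathcal{C}(s)=\mathcal{C}(t)$. *)

theory Defs
  imports Main "HOL-Library.Extended_Nat"
begin

text \<open>An LTS over states of type 's and actions of type 'a is a transition
relation T :: ('s \<times> 'a \<times> 's) set; the state set is the whole type 's.
The special action tau is a parameter.

A path is a triple (s0, st, n): start state s0, number of transitions
n :: enat (infinity for infinite paths), and st i = (a_(i+1), s_(i+1)) for i < n
(values of st at indices \<ge> n are irrelevant).\<close>

type_synonym ('s, 'a) path = "'s \<times> (nat \<Rightarrow> 'a \<times> 's) \<times> enat"

fun path_state :: "('s, 'a) path \<Rightarrow> nat \<Rightarrow> 's" where
  "path_state (s0, st, n) 0 = s0"
| "path_state (s0, st, n) (Suc i) = snd (st i)"

fun path_len :: "('s, 'a) path \<Rightarrow> enat" where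
  "path_len (s0, st, n) = n"

fun path_act :: "('s, 'a) path \<Rightarrow> nat \<Rightarrow> 'a" where
  "path_act (s0, st, n) i = fst (st i)"

definition is_path :: "('s \<times> 'a \<times> 's) set \<Rightarrow> 's \<Rightarrow> ('s, 'a) path \<Rightarrow> bool" where
  "is_path T s \<pi> \<longleftrightarrow> path_state \<pi> 0 = s \<and>
     (\<forall>i. enat i < path_len \<pi> \<longrightarrow>
          (path_state \<pi> i, path_act \<pi> i, path_state \<pi> (Suc i)) \<in> T)"

definition maximal_path :: "('s \<times> 'a \<times> 's) set \<Rightarrow> ('s, 'a) path \<Rightarrow> bool" where
  "maximal_path T \<pi> \<longleftrightarrow> path_len \<pi> = \<infinity> \<or>
     (\<exists>m. path_len \<pi> = enat m \<and> \<not> (\<exists>a t. (path_state \<pi> m, a, t) \<in> T))"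

text \<open>Indices i of transitions (the (i+1)-th step) that survive the contraction:
a step is removed exactly when it is a tau step whose target has the same colour
as its source, i.e. it lies inside a maximal block  C,tau,C,...,tau,C  (finite or
infinite), which is contracted to C.\<close>

definition kept :: "'a \<Rightarrow> ('s \<Rightarrow> 'c) \<Rightarrow> ('s, 'a) path \<Rightarrow> nat set" where
  "kept tau C \<pi> = {i. enat i < path_len \<pi> \<and>
      \<not> (path_act \<pi> i = tau \<and> C (path_state \<pi> (Suc i)) = C (path_state \<pi> i))}"

text \<open>A coloured trace is represented canonically as the initial colour together
with the (finite or infinite) sequence of remaining (action, colour) pairs,
given as a function nat \<Rightarrow> option that is Some on an initial segment of nat
and None afterwards.  The n-th entry is the n-th surviving step.\<close>

type_synonym ('a, 'c) ctrace = "'c \<times> (nat \<Rightarrow> ('a \<times> 'c) option)"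

definition coloured_trace :: "'a \<Rightarrow> ('s \<Rightarrow> 'c) \<Rightarrow> ('s, 'a) path \<Rightarrow> ('a, 'c) ctrace" where
  "coloured_trace tau C \<pi> =
    (C (path_state \<pi> 0),
     (\<lambda>n. if \<exists>k \<in> kept tau C \<pi>. card {j \<in> kept tau C \<pi>. j < k} = n
          then (let k = (THE k. k \<in> kept tau C \<pi> \<and> card {j \<in> kept tau C \<pi>. j < k} = n)
                in Some (path_act \<pi> k, C (path_state \<pi> (Suc k))))
          else None))"

definition ctraces :: "'a \<Rightarrow> ('s \<times> 'a \<times> 's) set \<Rightarrow> ('s \<Rightarrow> 'c) \<Rightarrow> 's \<Rightarrow> ('a, 'c) ctrace set" where
  "ctraces tau T C s = {coloured_trace tau C \<pi> | \<pi>. is_path T s \<pi>}"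

definition complete_ctraces :: "'a \<Rightarrow> ('s \<times> 'a \<times> 's) set \<Rightarrow> ('s \<Rightarrow> 'c) \<Rightarrow> 's \<Rightarrow> ('a, 'c) ctrace set" where
  "complete_ctraces tau T C s =
     {coloured_trace tau C \<pi> | \<pi>. is_path T s \<pi> \<and> maximal_path T \<pi>}"

definition divergent_ctraces :: "'a \<Rightarrow> ('s \<times> 'a \<times> 's) set \<Rightarrow> ('s \<Rightarrow> 'c) \<Rightarrow> 's \<Rightarrow> ('a, 'c) ctrace set" where
  "divergent_ctraces tau T C s =
     {coloured_trace tau C \<pi> | \<pi>. is_path T s \<pi> \<and> path_len \<pi> = \<infinity> \<and> finite (kept tau C \<pi>)}"

definition consistent :: "'a \<Rightarrow> ('s \<times> 'a \<times> 's) set \<Rightarrow> ('s \<Rightarrow> 'c) \<Rightarrow> bool" where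
  "consistent tau T C \<longleftrightarrow> (\<forall>s t. C s = C t \<longrightarrow> ctraces tau T C s = ctraces tau T C t)"

definition fully_consistent :: "'a \<Rightarrow> ('s \<times> 'a \<times> 's) set \<Rightarrow> ('s \<Rightarrow> 'c) \<Rightarrow> bool" where
  "fully_consistent tau T C \<longleftrightarrow>
     (\<forall>s t. C s = C t \<longrightarrow> complete_ctraces tau T C s = complete_ctraces tau T C t)"

definition div_preserving :: "'a \<Rightarrow> ('s \<times> 'a \<times> 's) set \<Rightarrow> ('s \<Rightarrow> 'c) \<Rightarrow> bool" where
  "div_preserving tau T C \<longleftrightarrow>
     (\<forall>s t. C s = C t \<longrightarrow> divergent_ctraces tau T C s = divergent_ctraces tau T C t)"

text \<open>Colours are taken from the type 's set; since
consistency notions are invariant under injective renaming of colours and any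
colouring can be renamed injectively to s \<mapsto> its colour class, this loses no
generality.\<close>

definition branching_bisim :: "'a \<Rightarrow> ('s \<times> 'a \<times> 's) set \<Rightarrow> 's \<Rightarrow> 's \<Rightarrow> bool" where
  "branching_bisim tau T s t \<longleftrightarrow>
     (\<exists>C :: 's \<Rightarrow> 's set. consistent tau T C \<and> C s = C t)"

definition branching_bisim_ds :: "'a \<Rightarrow> ('s \<times> 'a \<times> 's) set \<Rightarrow> 's \<Rightarrow> 's \<Rightarrow> bool" where
  "branching_bisim_ds tau T s t \<longleftrightarrow>
     (\<exists>C :: 's \<Rightarrow> 's set. fully_consistent tau T C \<and> C s = C t)"

definition branching_bisim_div :: "'a \<Rightarrow> ('s \<times> 'a \<times> 's) set \<Rightarrow> 's \<Rightarrow> 's \<Rightarrow> bool" where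
  "branching_bisim_div tau T s t \<longleftrightarrow>
     (\<exists>C :: 's \<Rightarrow> 's set. consistent tau T C \<and> div_preserving tau T C \<and> C s = C t)"

end

theory Submission
  imports Defs
begin

text \<open>Recolouring by a function g is compatible with taking coloured traces: the
(g \<circ> C)-coloured trace of a path is obtained from its C-coloured trace by applying g
and contracting the \<tau>-steps that have become colour preserving.  Hence whenever C is
consistent (fully consistent, divergence preserving), states of equal C-colour also have
equal (g \<circ> C)-coloured traces of the respective kind.  Reflexivity is witnessed by the
discrete colouring.  For transitivity, given suitable colourings C1 and C2,
colour each state by its class in the equivalence generated by the kernels of C1
and C2: this colouring factors through both, so its traces are constant along
C1- and C2-steps and hence on its own colour classes.  For divergence, a
C-divergent trace is transported by divergence preservation, while a path with
infinitely many C-visible steps is transported by consistency alone, because the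
number of visible steps can be read off the trace.\<close>

definition rank_in :: "nat set \<Rightarrow> nat \<Rightarrow> nat" where
  "rank_in K k = card {j \<in> K. j < k}"

definition nth_in :: "nat set \<Rightarrow> nat \<Rightarrow> nat" where
  "nth_in K = the_inv_into K (rank_in K)"

text \<open>The values f k for k \<in> K in increasing order of k, followed by None: the
encoding of the steps of a coloured trace.\<close>

definition subseq_at :: "nat set \<Rightarrow> (nat \<Rightarrow> 'x) \<Rightarrow> nat \<Rightarrow> 'x option" where
  "subseq_at K f n = (if n \<in> rank_in K ` K then Some (f (nth_in K n)) else None)"

lemma rank_in_less_iff:
  assumes "j \<in> K" "k \<in> K"
  shows "rank_in K j < rank_in K k \<longleftrightarrow> j < k"
proof -
  have "rank_in K j < rank_in K k" if "j \<in> K" "j < k" for j k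
    unfolding rank_in_def
    by (rule psubset_card_mono) (use that in \<open>auto intro: finite_subset[of _ "{..<k}"]\<close>)
  then show ?thesis
    using assms by (metis less_asym linorder_neqE_nat)
qed

lemma inj_on_rank_in: "inj_on (rank_in K) K"
  by (rule inj_onI) (metis rank_in_less_iff linorder_neqE_nat less_irrefl)

lemma nth_in_rank_in: "k \<in> K \<Longrightarrow> nth_in K (rank_in K k) = k"
  by (simp add: nth_in_def the_inv_into_f_f inj_on_rank_in)

lemma rank_in_Suc: "rank_in K (Suc i) = (if i \<in> K then Suc (rank_in K i) else rank_in K i)"
proof -
  have "{j \<in> K. j < Suc i} = {j \<in> K. j < i} \<union> (if i \<in> K then {i} else {})"
    by (auto simp: less_Suc_eq)
  moreover have "finite {j \<in> K. j < i}"
    by (rule finite_subset[of _ "{..<i}"]) auto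
  ultimately show ?thesis
    by (simp add: rank_in_def)
qed

lemma subseq_at_cong: "(\<And>k. k \<in> K \<Longrightarrow> f k = f' k) \<Longrightarrow> subseq_at K f = subseq_at K f'"
  by (auto simp: fun_eq_iff subseq_at_def nth_in_def intro!: the_inv_into_into inj_on_rank_in)

lemma subseq_at_rank_in: "k \<in> K \<Longrightarrow> subseq_at K f (rank_in K k) = Some (f k)"
  by (simp add: subseq_at_def nth_in_rank_in)

lemma finite_dom_subseq_at: "finite {n. subseq_at K f n \<noteq> None} \<longleftrightarrow> finite K"
proof -
  have "{n. subseq_at K f n \<noteq> None} = rank_in K ` K"
    by (auto simp: subseq_at_def)
  then show ?thesis
    by (simp add: finite_image_iff inj_on_rank_in)
qed

lemma rank_in_subset:
  assumes "L \<subseteq> K" "k \<in> K"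
  shows "rank_in L k = rank_in (rank_in K ` L) (rank_in K k)"
proof -
  have "{m \<in> rank_in K ` L. m < rank_in K k} = rank_in K ` {j \<in> L. j < k}"
    using assms rank_in_less_iff by blast
  moreover have "inj_on (rank_in K) {j \<in> L. j < k}"
    by (rule inj_on_subset[OF inj_on_rank_in]) (use assms(1) in auto)
  ultimately show ?thesis
    unfolding rank_in_def[of "rank_in K ` L"] by (simp add: card_image rank_in_def[of L])
qed

lemma subseq_at_subset:
  assumes "L \<subseteq> K"
  shows "subseq_at L f = subseq_at (rank_in K ` L) (f \<circ> nth_in K)"
proof
  fix n
  let ?N = "rank_in K ` L"
  have ranks: "rank_in ?N ` ?N = rank_in L ` L"
    unfolding image_image using assms by (intro image_cong) (auto simp: rank_in_subset subsetD)
  show "subseq_at L f n = subseq_at ?N (f \<circ> nth_in K) n"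
  proof (cases "n \<in> rank_in L ` L")
    case True
    then obtain k where k: "k \<in> L" "n = rank_in L k" by blast
    then have "nth_in ?N n = rank_in K k"
      using assms rank_in_subset nth_in_rank_in by (metis image_eqI subsetD)
    then show ?thesis
      using k assms ranks by (auto simp: subseq_at_def nth_in_rank_in)
  next
    case False
    then show ?thesis
      using ranks by (simp add: subseq_at_def)
  qed
qed

lemma coloured_trace_subseq_at:
  "coloured_trace tau C \<pi> = (C (path_state \<pi> 0),
     subseq_at (kept tau C \<pi>) (\<lambda>k. (path_act \<pi> k, C (path_state \<pi> (Suc k)))))"
  by (simp add: coloured_trace_def subseq_at_def nth_in_def the_inv_into_def rank_in_def
      image_iff eq_commute fun_eq_iff Let_def)

text \<open>The colour reached after n steps of a coloured trace (junk beyond its end).\<close>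

fun trace_colour :: "('a, 'c) ctrace \<Rightarrow> nat \<Rightarrow> 'c" where
  "trace_colour tr 0 = fst tr"
| "trace_colour tr (Suc n) = snd (the (snd tr n))"

lemma colour_path_state:
  assumes "enat i \<le> path_len \<pi>"
  shows "C (path_state \<pi> i) = trace_colour (coloured_trace tau C \<pi>) (rank_in (kept tau C \<pi>) i)"
  using assms
proof (induction i)
  case 0
  then show ?case
    by (simp add: coloured_trace_subseq_at rank_in_def)
next
  case (Suc i)
  then have "enat i < path_len \<pi>"
    by (simp add: Suc_ile_eq)
  then show ?case
    using Suc by (auto simp: rank_in_Suc coloured_trace_subseq_at subseq_at_rank_in kept_def)
qed

definition kept_steps :: "'a \<Rightarrow> ('c \<Rightarrow> 'd) \<Rightarrow> ('a, 'c) ctrace \<Rightarrow> nat set" where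
  "kept_steps tau g tr =
     {n. \<exists>a c. snd tr n = Some (a, c) \<and> \<not> (a = tau \<and> g c = g (trace_colour tr n))}"

definition recolour_trace :: "'a \<Rightarrow> ('c \<Rightarrow> 'd) \<Rightarrow> ('a, 'c) ctrace \<Rightarrow> ('a, 'd) ctrace" where
  "recolour_trace tau g tr =
     (g (fst tr), subseq_at (kept_steps tau g tr) (\<lambda>n. map_prod id g (the (snd tr n))))"

lemma kept_steps_coloured_trace:
  "kept_steps tau g (coloured_trace tau C \<pi>) = rank_in (kept tau C \<pi>) ` kept tau (g \<circ> C) \<pi>"
proof -
  let ?K = "kept tau C \<pi>"
  have "k \<in> kept tau (g \<circ> C) \<pi> \<longleftrightarrow> rank_in ?K k \<in> kept_steps tau g (coloured_trace tau C \<pi>)"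
    if "k \<in> ?K" for k
  proof -
    have "enat k \<le> path_len \<pi>"
      using that by (simp add: kept_def order_less_imp_le)
    then show ?thesis
      using that colour_path_state[of k \<pi> C tau]
      by (auto simp: kept_steps_def coloured_trace_subseq_at subseq_at_rank_in kept_def)
  qed
  moreover have "kept_steps tau g (coloured_trace tau C \<pi>) \<subseteq> rank_in ?K ` ?K"
    by (auto simp: kept_steps_def coloured_trace_subseq_at subseq_at_def split: if_splits)
  moreover have "kept tau (g \<circ> C) \<pi> \<subseteq> ?K"
    by (auto simp: kept_def)
  ultimately show ?thesis
    by blast
qed

lemma coloured_trace_comp:
  "coloured_trace tau (g \<circ> C) \<pi> = recolour_trace tau g (coloured_trace tau C \<pi>)"
proof -
  let ?K = "kept tau C \<pi>"
  have kept_sub: "kept tau (g \<circ> C) \<pi> \<subseteq> ?K"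
    by (auto simp: kept_def)
  then have "snd (coloured_trace tau (g \<circ> C) \<pi>)
      = subseq_at (rank_in ?K ` kept tau (g \<circ> C) \<pi>)
          (\<lambda>n. (path_act \<pi> (nth_in ?K n), g (C (path_state \<pi> (Suc (nth_in ?K n))))))"
    by (simp add: coloured_trace_subseq_at subseq_at_subset comp_def)
  also have "\<dots> = snd (recolour_trace tau g (coloured_trace tau C \<pi>))"
    unfolding recolour_trace_def kept_steps_coloured_trace
    using kept_sub by (auto simp: coloured_trace_subseq_at subseq_at_def intro!: subseq_at_cong)
  finally show ?thesis
    by (simp add: prod_eq_iff recolour_trace_def coloured_trace_subseq_at)
qed

lemma ctraces_comp: "ctraces tau T (g \<circ> C) s = recolour_trace tau g ` ctraces tau T C s"
  unfolding ctraces_def coloured_trace_comp by blast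

lemma complete_ctraces_comp:
  "complete_ctraces tau T (g \<circ> C) s = recolour_trace tau g ` complete_ctraces tau T C s"
  unfolding complete_ctraces_def coloured_trace_comp by blast

lemma finite_kept_iff_coloured_trace:
  "finite (kept tau C \<pi>) \<longleftrightarrow> finite {n. snd (coloured_trace tau C \<pi>) n \<noteq> None}"
  by (simp only: coloured_trace_subseq_at snd_conv finite_dom_subseq_at)

lemma infinite_kept_imp_infinite_path: "infinite (kept tau C \<pi>) \<Longrightarrow> path_len \<pi> = \<infinity>"
  by (cases "path_len \<pi>") (auto simp: kept_def intro: finite_subset[of _ "{..<_}"])

lemma divergent_ctraces_comp_mono:
  assumes "consistent tau T C" "div_preserving tau T C" "C y = C z"
  shows "divergent_ctraces tau T (g \<circ> C) y \<subseteq> divergent_ctraces tau T (g \<circ> C) z"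
proof
  fix tr
  assume "tr \<in> divergent_ctraces tau T (g \<circ> C) y"
  then obtain \<pi> where \<pi>: "tr = coloured_trace tau (g \<circ> C) \<pi>" "is_path T y \<pi>" "path_len \<pi> = \<infinity>"
    "finite (kept tau (g \<circ> C) \<pi>)"
    unfolding divergent_ctraces_def by blast
  obtain \<pi>' where \<pi>': "is_path T z \<pi>'" "path_len \<pi>' = \<infinity>"
    "coloured_trace tau C \<pi>' = coloured_trace tau C \<pi>"
  proof (cases "finite (kept tau C \<pi>)")
    case True
    with \<pi> have "coloured_trace tau C \<pi> \<in> divergent_ctraces tau T C y"
      unfolding divergent_ctraces_def by blast
    with assms(2,3) have "coloured_trace tau C \<pi> \<in> divergent_ctraces tau T C z"
      unfolding div_preserving_def by metis
    then obtain \<pi>' where "coloured_trace tau C \<pi> = coloured_trace tau C \<pi>'" "is_path T z \<pi>'"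
      "path_len \<pi>' = \<infinity>"
      unfolding divergent_ctraces_def by blast
    with that show ?thesis
      by simp
  next
    case False
    from \<pi> have "coloured_trace tau C \<pi> \<in> ctraces tau T C y"
      unfolding ctraces_def by blast
    with assms(1,3) have "coloured_trace tau C \<pi> \<in> ctraces tau T C z"
      unfolding consistent_def by metis
    then obtain \<pi>' where \<pi>': "coloured_trace tau C \<pi> = coloured_trace tau C \<pi>'" "is_path T z \<pi>'"
      unfolding ctraces_def by blast
    with False have "infinite (kept tau C \<pi>')"
      by (simp add: finite_kept_iff_coloured_trace)
    with that \<pi>' show ?thesis
      by (simp add: infinite_kept_imp_infinite_path)
  qed
  from \<pi>'(3) have same_trace: "coloured_trace tau (g \<circ> C) \<pi>' = tr"
    by (simp add: \<pi>(1) coloured_trace_comp)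
  with \<pi>(4) have "finite (kept tau (g \<circ> C) \<pi>')"
    by (simp add: finite_kept_iff_coloured_trace \<pi>(1))
  with \<pi>' same_trace show "tr \<in> divergent_ctraces tau T (g \<circ> C) z"
    unfolding divergent_ctraces_def by blast
qed

definition colour_invariant :: "(('s \<Rightarrow> 'c) \<Rightarrow> 's \<Rightarrow> 'x) \<Rightarrow> ('s \<Rightarrow> 'c) \<Rightarrow> bool" where
  "colour_invariant F C \<longleftrightarrow> (\<forall>s t. C s = C t \<longrightarrow> F C s = F C t)"

lemma factor_through_kernel:
  assumes "\<And>x y. C x = C y \<Longrightarrow> D x = D y"
  obtains g where "D = g \<circ> C"
proof
  show "D = (\<lambda>c. D (SOME x. C x = c)) \<circ> C"
  proof
    fix x
    have "C (SOME y. C y = C x) = C x"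
      by (rule someI) (rule refl)
    from assms[OF this] show "D x = ((\<lambda>c. D (SOME x. C x = c)) \<circ> C) x"
      by simp
  qed
qed

definition join_colouring :: "('s \<Rightarrow> 'c) \<Rightarrow> ('s \<Rightarrow> 'd) \<Rightarrow> 's \<Rightarrow> 's set" where
  "join_colouring C\<^sub>1 C\<^sub>2 x = {y. (\<lambda>x y. C\<^sub>1 x = C\<^sub>1 y \<or> C\<^sub>2 x = C\<^sub>2 y)\<^sup>*\<^sup>* x y}"

lemma join_colouring_eq_iff:
  "join_colouring C\<^sub>1 C\<^sub>2 x = join_colouring C\<^sub>1 C\<^sub>2 y \<longleftrightarrow> (\<lambda>x y. C\<^sub>1 x = C\<^sub>1 y \<or> C\<^sub>2 x = C\<^sub>2 y)\<^sup>*\<^sup>* x y"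
proof -
  let ?R = "\<lambda>x y. C\<^sub>1 x = C\<^sub>1 y \<or> C\<^sub>2 x = C\<^sub>2 y"
  have "equivp ?R\<^sup>*\<^sup>*"
    by (rule equivp_rtranclp) (simp add: symp_def disj_commute eq_commute)
  then have "?R\<^sup>*\<^sup>* x y \<longleftrightarrow> ?R\<^sup>*\<^sup>* x = ?R\<^sup>*\<^sup>* y"
    unfolding equivp_def by blast
  then show ?thesis
    unfolding join_colouring_def by (auto dest: Collect_inj)
qed

lemma colour_invariant_join:
  fixes F :: "('s \<Rightarrow> 's set) \<Rightarrow> 's \<Rightarrow> 'x"
  assumes comp: "\<And>C g s t. colour_invariant F C \<Longrightarrow> C s = C t \<Longrightarrow> F (g \<circ> C) s = F (g \<circ> C) t"
    and inv\<^sub>1: "colour_invariant F C\<^sub>1" and inv\<^sub>2: "colour_invariant F C\<^sub>2"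
  shows "colour_invariant F (join_colouring C\<^sub>1 C\<^sub>2)"
proof -
  let ?D = "join_colouring C\<^sub>1 C\<^sub>2"
  obtain g\<^sub>1 where g\<^sub>1: "?D = g\<^sub>1 \<circ> C\<^sub>1"
    using factor_through_kernel[of C\<^sub>1 ?D] join_colouring_eq_iff by (metis (mono_tags) r_into_rtranclp)
  obtain g\<^sub>2 where g\<^sub>2: "?D = g\<^sub>2 \<circ> C\<^sub>2"
    using factor_through_kernel[of C\<^sub>2 ?D] join_colouring_eq_iff by (metis (mono_tags) r_into_rtranclp)
  have F_step: "F ?D x = F ?D y" if "C\<^sub>1 x = C\<^sub>1 y \<or> C\<^sub>2 x = C\<^sub>2 y" for x y
    using that comp[OF inv\<^sub>1, of x y g\<^sub>1] comp[OF inv\<^sub>2, of x y g\<^sub>2]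
    unfolding g\<^sub>1[symmetric] g\<^sub>2[symmetric] by blast
  have F_chain: "F ?D x = F ?D y" if "(\<lambda>x y. C\<^sub>1 x = C\<^sub>1 y \<or> C\<^sub>2 x = C\<^sub>2 y)\<^sup>*\<^sup>* x y" for x y
    using that
  proof (induction rule: rtranclp_induct)
    case (step y z)
    then show ?case
      using F_step[of y z] by simp
  qed simp
  show ?thesis
    unfolding colour_invariant_def join_colouring_eq_iff using F_chain by (intro allI impI)
qed

lemma equivp_colour_invariant:
  fixes F :: "('s \<Rightarrow> 's set) \<Rightarrow> 's \<Rightarrow> 'x"
  assumes comp: "\<And>C g s t. colour_invariant F C \<Longrightarrow> C s = C t \<Longrightarrow> F (g \<circ> C) s = F (g \<circ> C) t"
  shows "equivp (\<lambda>s t. \<exists>C. colour_invariant F C \<and> C s = C t)"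
proof (intro equivpI reflpI sympI transpI)
  fix s
  show "\<exists>C. colour_invariant F C \<and> C s = C s"
    by (rule exI[of _ "\<lambda>x. {x}"]) (simp add: colour_invariant_def)
next
  fix s t
  assume "\<exists>C. colour_invariant F C \<and> C s = C t"
  then show "\<exists>C. colour_invariant F C \<and> C t = C s"
    by metis
next
  fix s t u
  assume "\<exists>C. colour_invariant F C \<and> C s = C t" "\<exists>C. colour_invariant F C \<and> C t = C u"
  then obtain C\<^sub>1 C\<^sub>2 where C\<^sub>1: "colour_invariant F C\<^sub>1" "C\<^sub>1 s = C\<^sub>1 t"
    and C\<^sub>2: "colour_invariant F C\<^sub>2" "C\<^sub>2 t = C\<^sub>2 u"
    by blast
  have "join_colouring C\<^sub>1 C\<^sub>2 s = join_colouring C\<^sub>1 C\<^sub>2 u"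
    unfolding join_colouring_eq_iff using C\<^sub>1(2) C\<^sub>2(2)
    by (metis (mono_tags, lifting) r_into_rtranclp rtranclp.rtrancl_into_rtrancl)
  moreover have "colour_invariant F (join_colouring C\<^sub>1 C\<^sub>2)"
    using comp C\<^sub>1(1) C\<^sub>2(1) by (rule colour_invariant_join)
  ultimately show "\<exists>C. colour_invariant F C \<and> C s = C u"
    by blast
qed

theorem theorem3p6:
  fixes tau :: 'a and T :: "('s \<times> 'a \<times> 's) set"
  shows "equivp (branching_bisim tau T) \<and> equivp (branching_bisim_ds tau T)
         \<and> equivp (branching_bisim_div tau T)"
proof (intro conjI)
  have "equivp (\<lambda>s t. \<exists>C :: 's \<Rightarrow> 's set. colour_invariant (ctraces tau T) C \<and> C s = C t)"
    by (rule equivp_colour_invariant) (metis colour_invariant_def ctraces_comp)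
  then show "equivp (branching_bisim tau T)"
    unfolding branching_bisim_def consistent_def colour_invariant_def .
  have "equivp (\<lambda>s t. \<exists>C :: 's \<Rightarrow> 's set. colour_invariant (complete_ctraces tau T) C \<and> C s = C t)"
    by (rule equivp_colour_invariant) (metis colour_invariant_def complete_ctraces_comp)
  then show "equivp (branching_bisim_ds tau T)"
    unfolding branching_bisim_ds_def fully_consistent_def colour_invariant_def .
  let ?F = "\<lambda>C s. (ctraces tau T C s, divergent_ctraces tau T C s)"
  have inv_iff: "colour_invariant ?F C \<longleftrightarrow> consistent tau T C \<and> div_preserving tau T C" for C
    unfolding colour_invariant_def consistent_def div_preserving_def prod.inject by blast
  have "equivp (\<lambda>s t. \<exists>C :: 's \<Rightarrow> 's set. colour_invariant ?F C \<and> C s = C t)"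
  proof (rule equivp_colour_invariant)
    fix C :: "'s \<Rightarrow> 's set" and g :: "'s set \<Rightarrow> 's set" and s t
    assume "colour_invariant ?F C" and st: "C s = C t"
    then have C: "consistent tau T C" "div_preserving tau T C"
      by (simp_all add: inv_iff)
    have "ctraces tau T (g \<circ> C) s = ctraces tau T (g \<circ> C) t"
      using C(1) st unfolding consistent_def ctraces_comp by metis
    moreover have "divergent_ctraces tau T (g \<circ> C) s = divergent_ctraces tau T (g \<circ> C) t"
      using C st by (intro equalityI divergent_ctraces_comp_mono) simp_all
    ultimately show "?F (g \<circ> C) s = ?F (g \<circ> C) t"
      by simp
  qed
  then show "equivp (branching_bisim_div tau T)"
    unfolding branching_bisim_div_def inv_iff by simp
qed

end
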